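(* Let $q$ be odd, $\alpha,\beta\in\mathbb{F}_{q^2}$ with $\alpha\ne0$ and $(\beta^q-\beta)^2+4\alpha^{q+1}$ a nonsquare in $\mathbb{F}_q$, and let $R_1=(0,\epsilon,1)$. Then (1) $\mathrm{pedal}(R_1)$ consists exactly of the points $Q_x=(x,\,2\alpha x^2+(\beta-\beta^q)x^{q+1}+\epsilon,\,1)$ with $x\in\mathbb{F}_{q^2}$ satisfying $\alpha x^2-\alpha^q x^{2q}+(\beta-\beta^q)x^{q+1}+2\epsilon=0$; (2) the points of $\mathrm{pedal}(R_1)$ lie on the lines of the Baer pencil joining the vertex $U_\infty=(1,0,0)$ to the Baer subline $\{E_{s-\epsilon}=(0,s-\epsilon,1): s\in\mathbb{F}_q\}\cup\{(0,1,0)\}$.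
   Context: Points of $\mathrm{PG}(2,q^2)$ have homogeneous coordinates $(x,y,z)$. $\zeta$ is a primitive element of $\mathbb{F}_{q^2}$ and $\epsilon=\zeta^{(q+1)/2}$ (so $\epsilon^q=-\epsilon$ and $\epsilon^2$ is a primitive element of $\mathbb{F}_q$). $\mathcal U_{\alpha\beta}=\{(x,\alpha x^2+\beta x^{q+1}+r,1): x\in\mathbb{F}_{q^2}, r\in\mathbb{F}_q\}\cup\{(0,1,0)\}$, which under the hypotheses is a unital (a set of $q^3+1$ points meeting every line in $1$ or $q+1$ points). For a point $P$ not on the unital, $\mathrm{pedal}(P)$ is the set of points of contact of the $q+1$ tangent lines (lines meeting the unital in exactly one point) through $P$. A Baer pencil is the set of $q+1$ lines joining a vertex point to the $q+1$ points of a Baer subline (a set of points of a line projectively equivalent to $\mathrm{PG}(1,q)$). *)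

theory Defs
  imports Main
begin

definition pt :: "'a::field \<times> 'a \<times> 'a \<Rightarrow> ('a \<times> 'a \<times> 'a) set" where
  "pt v = {(c * fst v, c * fst (snd v), c * snd (snd v)) | c. c \<noteq> 0}"

definition points :: "('a::field \<times> 'a \<times> 'a) set set" where
  "points = {pt v | v. v \<noteq> (0, 0, 0)}"

definition line_of :: "'a::field \<Rightarrow> 'a \<Rightarrow> 'a \<Rightarrow> ('a \<times> 'a \<times> 'a) set set" where
  "line_of a b c = {pt (x, y, z) | x y z. (x, y, z) \<noteq> (0, 0, 0) \<and> a * x + b * y + c * z = 0}"

definition lines :: "('a::field \<times> 'a \<times> 'a) set set set" where
  "lines = {line_of a b c | a b c. (a, b, c) \<noteq> (0, 0, 0)}"

text \<open>The set U_{alpha beta} (q is the order of the subfield F_q; F_q = {r. r^q = r}).\<close>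
definition unitalU :: "nat \<Rightarrow> 'a::field \<Rightarrow> 'a \<Rightarrow> ('a \<times> 'a \<times> 'a) set set" where
  "unitalU q \<alpha> \<beta> =
     {pt (x, \<alpha> * x ^ 2 + \<beta> * x ^ (q + 1) + r, 1) | x r. r ^ q = r} \<union> {pt (0, 1, 0)}"

definition tangent_line :: "('a::field \<times> 'a \<times> 'a) set set \<Rightarrow> ('a \<times> 'a \<times> 'a) set set \<Rightarrow> bool" where
  "tangent_line U L \<longleftrightarrow> L \<in> lines \<and> card (L \<inter> U) = 1"

definition pedal :: "('a::field \<times> 'a \<times> 'a) set set \<Rightarrow> ('a \<times> 'a \<times> 'a) set \<Rightarrow> ('a \<times> 'a \<times> 'a) set set" where
  "pedal U P = {Q. \<exists>L. tangent_line U L \<and> P \<in> L \<and> L \<inter> U = {Q}}"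

definition primitive_elem :: "'a::{field,finite} \<Rightarrow> bool" where
  "primitive_elem z \<longleftrightarrow> z \<noteq> 0 \<and> (\<forall>x. x \<noteq> 0 \<longrightarrow> (\<exists>k::nat. x = z ^ k))"

definition join_lines :: "('a::field \<times> 'a \<times> 'a) set \<Rightarrow> ('a \<times> 'a \<times> 'a) set \<Rightarrow> ('a \<times> 'a \<times> 'a) set set set" where
  "join_lines P Q = {L. L \<in> lines \<and> P \<in> L \<and> Q \<in> L}"

definition pencil :: "('a::field \<times> 'a \<times> 'a) set \<Rightarrow> ('a \<times> 'a \<times> 'a) set set \<Rightarrow> ('a \<times> 'a \<times> 'a) set set set" where
  "pencil V B = (\<Union>P\<in>B. join_lines V P)"

end

(*
  Write \<phi> x = x^q. As q is a power of the characteristic and x^(q^2) = x, \<phi> is an involutive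
  automorphism of F_(q^2), and \<epsilon>^(q-1) = \<zeta>^((q^2-1)/2) = -1 gives \<phi> \<epsilon> = -\<epsilon>; nothing else
  about F_(q^2) is used.

  Besides x = 0, which meets the unital in q + 1 points, the lines through R_1 = (0,\<epsilon>,1) are
  y = m x + \<epsilon>. Their affine point with abscissa x lies on the unital iff
  r = m x + \<epsilon> - \<alpha> x^2 - \<beta> x \<phi>(x) is \<phi>-fixed, i.e. iff D_m(x) = \<phi>(r) - r (defect m x) vanishes, and
    D_m(x0 + t) = D_m(x0) + N(t) + B t - \<phi>(B) \<phi>(t),   B = 2 \<alpha> x0 + (\<beta> - \<phi> \<beta>) \<phi>(x0) - m,
  where N(t) = \<alpha> t^2 - \<phi>(\<alpha>) \<phi>(t)^2 + (\<beta> - \<phi> \<beta>) t \<phi>(t) (skew_form t) is anisotropic by the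
  nonsquare hypothesis. So for a root x0 of D_m the line is tangent iff B = 0: then x0 is the only
  root, while for B \<noteq> 0 a \<phi>-fixed multiple of \<epsilon> \<phi>(B) is a second one. Substituting
  m = 2 \<alpha> x0 + (\<beta> - \<phi> \<beta>) \<phi>(x0) turns D_m(x0) = 0 into N(x0) + 2 \<epsilon> = 0, which is (1).
  For (2), the contact point has second coordinate s - \<epsilon> with s = \<alpha> x0^2 + \<phi>(\<alpha> x0^2) in F_q,
  so it lies on the line joining U_\<infinity> = (1,0,0) to (0, s - \<epsilon>, 1).
*)

theory Submission
  imports Defs "HOL-Algebra.Sylow" "HOL-Algebra.Multiplicative_Group"
    "HOL-Computational_Algebra.Primes"
begin

definition additive_group :: "'a::ring_1 monoid" where
  "additive_group = \<lparr>carrier = UNIV, monoid.mult = (+), one = 0\<rparr>"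

definition multiplicative_group :: "'a::field monoid" where
  "multiplicative_group = \<lparr>carrier = UNIV - {0}, monoid.mult = (*), one = 1\<rparr>"

lemma group_additive_group: "group additive_group"
  by (rule groupI) (auto simp: additive_group_def add.assoc intro: exI[of _ "- x" for x])

lemma group_multiplicative_group: "group multiplicative_group"
  by (rule groupI)
    (auto simp: multiplicative_group_def mult.assoc intro!: bexI[of _ "inverse x" for x])

lemma nat_pow_additive_group: "x [^]\<^bsub>additive_group\<lparr>carrier := H\<rparr>\<^esub> n = of_nat n * x"
  by (induction n) (simp_all add: additive_group_def algebra_simps)

lemma nat_pow_multiplicative_group: "x [^]\<^bsub>multiplicative_group\<^esub> n = x ^ n"
  by (induction n) (simp_all add: multiplicative_group_def mult.commute)

lemma power_card_UNIV_minus_one: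
  fixes x :: "'a::{field,finite}"
  assumes "x \<noteq> 0"
  shows "x ^ (card (UNIV :: 'a set) - 1) = 1"
proof -
  have "x [^]\<^bsub>multiplicative_group\<^esub> order (multiplicative_group :: 'a monoid)
      = \<one>\<^bsub>multiplicative_group\<^esub>"
    by (rule group.pow_order_eq_1[OF group_multiplicative_group])
      (use assms in \<open>simp add: multiplicative_group_def\<close>)
  moreover have "order (multiplicative_group :: 'a monoid) = card (UNIV :: 'a set) - 1"
    by (simp add: order_def multiplicative_group_def card_Diff_singleton)
  ultimately have "x ^ (card (UNIV :: 'a set) - 1) = \<one>\<^bsub>multiplicative_group\<^esub>"
    by (simp only: nat_pow_multiplicative_group)
  thus ?thesis
    by (simp add: multiplicative_group_def)
qed

lemma two_le_card_UNIV: "2 \<le> card (UNIV :: 'a::{field,finite} set)"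
proof -
  have "card {0, 1::'a} \<le> card (UNIV :: 'a set)" by (rule card_mono) simp_all
  thus ?thesis by simp
qed

lemma power_card_UNIV_eq_self:
  fixes x :: "'a::{field,finite}"
  shows "x ^ card (UNIV :: 'a set) = x"
proof (cases "x = 0")
  case False
  hence "x * x ^ (card (UNIV :: 'a set) - 1) = x"
    using power_card_UNIV_minus_one[OF False] by simp
  thus ?thesis
    using two_le_card_UNIV[where 'a = 'a] by (simp flip: power_Suc)
qed (use two_le_card_UNIV[where 'a = 'a] in simp)

lemma prime_dvd_card_UNIV_imp_eq_CHAR:
  assumes r: "prime r" and r_dvd: "r dvd card (UNIV :: 'a::{field,finite} set)"
  shows "r = CHAR('a)"
proof -
  let ?G = "additive_group :: 'a monoid"
  define a where "a = multiplicity r (card (UNIV :: 'a set))"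
  have "r ^ a dvd card (UNIV :: 'a set)" unfolding a_def by (rule multiplicity_dvd)
  then obtain m where "order ?G = r ^ a * m" by (auto simp: order_def additive_group_def)
  from sylow_thm[OF r group_additive_group this] obtain H where H: "subgroup H ?G" "card H = r ^ a"
    by (auto simp: additive_group_def)
  have "a \<ge> 1" unfolding a_def using r r_dvd
    by (simp add: Suc_le_eq prime_multiplicity_gt_zero_iff)
  hence "card H > 1" using H(2) prime_gt_1_nat[OF r] one_less_power[of r a] by simp
  moreover have "card H \<le> 1" if "H \<subseteq> {0}"
    using card_mono[OF _ that] by simp
  ultimately obtain x where x: "x \<in> H" "x \<noteq> 0"
    by fastforce
  interpret GH: group "?G\<lparr>carrier := H\<rparr>"
    by (rule subgroup.subgroup_is_group[OF H(1) group_additive_group])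
  have "x [^]\<^bsub>?G\<lparr>carrier := H\<rparr>\<^esub> order (?G\<lparr>carrier := H\<rparr>) = \<one>\<^bsub>?G\<lparr>carrier := H\<rparr>\<^esub>"
    by (rule GH.pow_order_eq_1) (use x in simp)
  hence "of_nat (r ^ a) * x = 0"
    using H(2) by (simp add: nat_pow_additive_group order_def, simp add: additive_group_def)
  hence "of_nat (r ^ a) = (0::'a)"
    using x(2) by simp
  hence "CHAR('a) dvd r ^ a"
    by (simp only: of_nat_eq_0_iff_char_dvd)
  moreover have "prime CHAR('a)" by (simp add: finite_imp_CHAR_pos prime_CHAR_semidom)
  ultimately show ?thesis
    using r by (metis prime_dvd_power primes_dvd_imp_eq)
qed

lemma card_UNIV_eq_CHAR_power: "\<exists>n. card (UNIV :: 'a::{field,finite} set) = CHAR('a) ^ n"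
proof -
  have "prime CHAR('a)" by (simp add: finite_imp_CHAR_pos prime_CHAR_semidom)
  then obtain k n where n: "\<not> CHAR('a) dvd n" and card: "card (UNIV :: 'a set) = n * CHAR('a) ^ k"
    using prime_power_canonical[of "CHAR('a)" "card (UNIV :: 'a set)"]
    by (auto simp: finite_UNIV_card_ge_0)
  have "n = 1"
  proof (rule ccontr)
    assume "n \<noteq> 1"
    then obtain r where "prime r" "r dvd n" using prime_factor_nat by blast
    moreover from this have "r = CHAR('a)"
      by (intro prime_dvd_card_UNIV_imp_eq_CHAR) (simp_all add: card)
    ultimately show False using n by simp
  qed
  thus ?thesis using card by auto
qed

lemma power_add_if_dvd_card_UNIV:
  assumes "q dvd card (UNIV :: 'a::{field,finite} set)"
  shows "(x + y :: 'a) ^ q = x ^ q + y ^ q"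
proof -
  have "prime CHAR('a)" by (simp add: finite_imp_CHAR_pos prime_CHAR_semidom)
  moreover obtain i where "q = CHAR('a) ^ i"
    using assms card_UNIV_eq_CHAR_power[where 'a = 'a] divides_primepow_nat[OF calculation] by metis
  ultimately show ?thesis by (rule freshmans_dream')
qed

lemma two_neq_zero_if_odd_card_UNIV:
  assumes "odd (card (UNIV :: 'a::{field,finite} set))"
  shows "(2::'a) \<noteq> 0"
proof
  assume "(2::'a) = 0"
  hence "CHAR('a) dvd 2" by (metis of_nat_eq_0_iff_char_dvd of_nat_numeral)
  moreover have "prime CHAR('a)" by (simp add: finite_imp_CHAR_pos prime_CHAR_semidom)
  ultimately have "CHAR('a) = 2" using primes_dvd_imp_eq two_is_prime_nat by blast
  moreover obtain n where "card (UNIV :: 'a set) = CHAR('a) ^ n"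
    using card_UNIV_eq_CHAR_power by blast
  ultimately show False
    using assms two_le_card_UNIV[where 'a = 'a] by (cases n) simp_all
qed

lemma primitive_elem_power_neq_one:
  fixes \<zeta> :: "'a::{field,finite}"
  assumes prim: "primitive_elem \<zeta>" and "0 < k" and "k < card (UNIV :: 'a set) - 1"
  shows "\<zeta> ^ k \<noteq> (1::'a)"
proof
  assume "\<zeta> ^ k = 1"
  have "UNIV - {0} \<subseteq> (\<lambda>j. \<zeta> ^ j) ` {..<k}"
  proof
    fix x :: 'a assume "x \<in> UNIV - {0}"
    then obtain i where "x = \<zeta> ^ i" using prim unfolding primitive_elem_def by auto
    also have "\<dots> = (\<zeta> ^ k) ^ (i div k) * \<zeta> ^ (i mod k)"
      by (simp flip: power_mult power_add)
    finally show "x \<in> (\<lambda>j. \<zeta> ^ j) ` {..<k}"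
      using \<open>\<zeta> ^ k = 1\<close> \<open>0 < k\<close> by auto
  qed
  hence "card (UNIV - {0::'a}) \<le> card ((\<lambda>j. \<zeta> ^ j) ` {..<k})"
    by (rule card_mono[rotated]) simp
  also have "\<dots> \<le> k"
    using card_image_le[of "{..<k}" "\<lambda>j. \<zeta> ^ j"] by simp
  finally have "card (UNIV - {0::'a}) \<le> k" .
  thus False using assms(3) by (simp add: card_Diff_singleton)
qed

lemma primitive_elem_power_half_card:
  fixes \<zeta> :: "'a::{field,finite}"
  assumes prim: "primitive_elem \<zeta>" and odd_card: "odd (card (UNIV :: 'a set))"
  shows "\<zeta> ^ ((card (UNIV :: 'a set) - 1) div 2) = -1"
proof -
  define k where "k = (card (UNIV :: 'a set) - 1) div 2"
  have "2 * k = card (UNIV :: 'a set) - 1" and "0 < k"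
    using odd_card two_le_card_UNIV[where 'a = 'a] unfolding k_def by (auto elim: oddE)
  have "\<zeta> \<noteq> 0" using prim by (simp add: primitive_elem_def)
  hence "\<zeta> ^ (2 * k) = 1"
    unfolding \<open>2 * k = _\<close> by (rule power_card_UNIV_minus_one)
  hence "\<zeta> ^ k * \<zeta> ^ k = 1"
    by (simp flip: power_add mult_2)
  moreover have "\<zeta> ^ k \<noteq> 1"
    using primitive_elem_power_neq_one[OF prim \<open>0 < k\<close>] \<open>2 * k = _\<close> \<open>0 < k\<close> by simp
  ultimately show ?thesis
    unfolding k_def [symmetric] by (metis square_eq_1_iff)
qed

lemma power_primitive_elem_conj:
  fixes \<zeta> :: "'a::{field,finite}"
  assumes card: "card (UNIV :: 'a set) = q ^ 2" and "odd q" and "primitive_elem \<zeta>"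
  shows "(\<zeta> ^ ((q + 1) div 2)) ^ q = - (\<zeta> ^ ((q + 1) div 2))"
proof -
  obtain j where q: "q = 2 * j + 1" using \<open>odd q\<close> by (rule oddE)
  have "card (UNIV :: 'a set) - 1 = 2 * ((q + 1) div 2 * (q - 1))"
    by (simp add: card q algebra_simps power2_eq_square)
  hence "(card (UNIV :: 'a set) - 1) div 2 = (q + 1) div 2 * (q - 1)"
    by simp
  moreover have "odd (card (UNIV :: 'a set))" using card \<open>odd q\<close> by simp
  ultimately have "(\<zeta> ^ ((q + 1) div 2)) ^ (q - 1) = -1"
    using primitive_elem_power_half_card[OF \<open>primitive_elem \<zeta>\<close>] by (metis power_mult)
  moreover have "(\<zeta> ^ ((q + 1) div 2)) ^ q = \<zeta> ^ ((q + 1) div 2) * (\<zeta> ^ ((q + 1) div 2)) ^ (q - 1)"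
    by (simp add: q)
  ultimately show ?thesis by simp
qed

lemma mem_pt_self: "v \<in> pt v"
  unfolding pt_def by (cases v) (auto intro!: exI[of _ 1])

lemma pt_affine_eq_iff: "pt (x, y, 1) = pt (x', y', 1 :: 'a::field) \<longleftrightarrow> x = x' \<and> y = y'"
proof
  assume "pt (x, y, 1) = pt (x', y', 1)"
  hence "(x', y', 1) \<in> pt (x, y, 1)" using mem_pt_self by metis
  then obtain c where "(x', y', 1) = (c * x, c * y, c * 1)" unfolding pt_def by auto
  thus "x = x' \<and> y = y'" by simp
qed simp

lemma pt_infinity_neq_affine: "pt (0, 1, 0) \<noteq> pt (x, y, 1 :: 'a::field)"
proof
  assume "pt (0, 1, 0) = pt (x, y, 1)"
  hence "(x, y, 1) \<in> pt (0, 1, 0)" using mem_pt_self by metis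
  thus False unfolding pt_def by auto
qed

lemma pt_mem_line_of_iff:
  assumes "(x, y, z) \<noteq> (0, 0, 0 :: 'a::field)"
  shows "pt (x, y, z) \<in> line_of a b c \<longleftrightarrow> a * x + b * y + c * z = 0"
proof
  assume "pt (x, y, z) \<in> line_of a b c"
  then obtain x' y' z'
    where on_line: "pt (x, y, z) = pt (x', y', z')" "a * x' + b * y' + c * z' = 0"
    unfolding line_of_def by auto
  then obtain k where "(x, y, z) = (k * x', k * y', k * z')"
    using mem_pt_self[of "(x, y, z)"] unfolding pt_def by auto
  hence "a * x + b * y + c * z = k * (a * x' + b * y' + c * z')" by (simp add: algebra_simps)
  thus "a * x + b * y + c * z = 0" using on_line(2) by simp
qed (use assms in \<open>auto simp: line_of_def\<close>)

lemma line_of_in_lines: "(a, b, c) \<noteq> (0, 0, 0) \<Longrightarrow> line_of a b c \<in> lines"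
  unfolding lines_def by blast

lemma line_of_scale:
  assumes "k \<noteq> (0 :: 'a::field)"
  shows "line_of (k * a) (k * b) (k * c) = line_of a b c"
proof -
  have "k * a * x + k * b * y + k * c * z = k * (a * x + b * y + c * z)" for x y z
    by (simp add: algebra_simps)
  thus ?thesis using assms unfolding line_of_def by simp
qed

lemma lines_through_affine_point:
  assumes "L \<in> lines" and "pt (x0, y0, 1 :: 'a::field) \<in> L"
  obtains "L = line_of 1 0 (- x0)" | m where "L = line_of (- m) 1 (m * x0 - y0)"
proof -
  obtain a b c where L: "L = line_of a b c" "(a, b, c) \<noteq> (0, 0, 0)"
    using assms(1) unfolding lines_def by auto
  have "a * x0 + b * y0 + c = 0"
    using assms(2) unfolding L(1) by (subst (asm) pt_mem_line_of_iff) auto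
  hence c: "c = - (a * x0 + b * y0)" by (simp add: add_eq_0_iff)
  show thesis
  proof (cases "b = 0")
    case True
    hence "a \<noteq> 0" using L(2) c by auto
    hence "L = line_of 1 0 (- x0)"
      using line_of_scale[of a 1 0 "- x0"] by (simp add: L(1) c True)
    thus thesis by (rule that(1))
  next
    case False
    hence "L = line_of (- (- a / b)) 1 (- a / b * x0 - y0)"
      using line_of_scale[of b "- (- a / b)" 1 "- a / b * x0 - y0"]
      by (simp add: L(1) c algebra_simps)
    thus thesis by (rule that(2))
  qed
qed

locale field_involution =
  fixes \<phi> :: "'a::field \<Rightarrow> 'a"
  assumes hom_add: "\<phi> (x + y) = \<phi> x + \<phi> y"
    and hom_mult: "\<phi> (x * y) = \<phi> x * \<phi> y"
    and involutive: "\<phi> (\<phi> x) = x"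
begin

lemma hom_zero: "\<phi> 0 = 0"
  using hom_add[of 0 0] by (metis add.right_neutral add_left_cancel)

lemma hom_eq_0_iff: "\<phi> x = 0 \<longleftrightarrow> x = 0"
  by (metis involutive hom_zero)

lemma hom_one: "\<phi> 1 = 1"
proof -
  have "\<phi> 1 * \<phi> 1 = \<phi> 1 * 1" using hom_mult[of 1 1] by simp
  thus ?thesis using hom_eq_0_iff[of 1] mult_left_cancel by simp
qed

lemma hom_uminus: "\<phi> (- x) = - \<phi> x"
  using hom_add[of x "- x"] by (simp add: hom_zero add_eq_0_iff)

lemma hom_diff: "\<phi> (x - y) = \<phi> x - \<phi> y"
  using hom_add[of x "- y"] by (simp add: hom_uminus)

lemma hom_power: "\<phi> (x ^ n) = \<phi> x ^ n"
  by (induction n) (simp_all add: hom_one hom_mult)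

lemma hom_numeral: "\<phi> (numeral n) = numeral n"
  by (induction n) (simp_all only: numeral.simps hom_add hom_one)

lemma hom_inverse: "\<phi> (inverse x) = inverse (\<phi> x)"
proof (cases "x = 0")
  case False
  hence "\<phi> x * \<phi> (inverse x) = 1" by (simp flip: hom_mult add: hom_one)
  thus ?thesis by (rule inverse_unique[symmetric])
qed (simp add: hom_zero)

lemma hom_divide: "\<phi> (x / y) = \<phi> x / \<phi> y"
  by (simp add: divide_inverse hom_mult hom_inverse)

lemmas hom_simps = hom_add hom_mult involutive hom_zero hom_one hom_uminus hom_diff hom_power
  hom_numeral hom_divide

end

locale unital_setting = field_involution +
  fixes \<alpha> \<beta> :: "'a::field"
  assumes nonsquare: "\<nexists>y. \<phi> y = y \<and> y ^ 2 = (\<phi> \<beta> - \<beta>) ^ 2 + 4 * \<alpha> * \<phi> \<alpha>"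
begin

definition unital :: "('a \<times> 'a \<times> 'a) set set" where
  "unital = {pt (x, \<alpha> * x ^ 2 + \<beta> * x * \<phi> x + r, 1) | x r. \<phi> r = r} \<union> {pt (0, 1, 0)}"

definition unital_offset :: "'a \<Rightarrow> 'a \<Rightarrow> 'a" where
  "unital_offset x y = y - \<alpha> * x ^ 2 - \<beta> * x * \<phi> x"

definition skew_form :: "'a \<Rightarrow> 'a" where
  "skew_form t = \<alpha> * t ^ 2 - \<phi> \<alpha> * \<phi> t ^ 2 + (\<beta> - \<phi> \<beta>) * t * \<phi> t"

definition tangent_slope :: "'a \<Rightarrow> 'a" where
  "tangent_slope x = 2 * \<alpha> * x + (\<beta> - \<phi> \<beta>) * \<phi> x"

lemma affine_mem_unital_iff:
  "pt (x, y, 1) \<in> unital \<longleftrightarrow> \<phi> (unital_offset x y) = unital_offset x y"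
proof
  assume "pt (x, y, 1) \<in> unital"
  then obtain x' r where "pt (x, y, 1) = pt (x', \<alpha> * x' ^ 2 + \<beta> * x' * \<phi> x' + r, 1)" "\<phi> r = r"
    using pt_infinity_neq_affine unfolding unital_def by blast
  thus "\<phi> (unital_offset x y) = unital_offset x y"
    by (simp add: pt_affine_eq_iff unital_offset_def)
next
  assume "\<phi> (unital_offset x y) = unital_offset x y"
  thus "pt (x, y, 1) \<in> unital"
    unfolding unital_def
    by (intro UnI1 CollectI exI[of _ x] exI[of _ "unital_offset x y"]) (simp add: unital_offset_def)
qed

lemma unital_cases:
  assumes "P \<in> unital"
  obtains "P = pt (0, 1, 0)" | x y where "P = pt (x, y, 1)"
  using assms unfolding unital_def by blast

lemma infinity_mem_unital: "pt (0, 1, 0) \<in> unital"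
  by (simp add: unital_def)

lemma vertical_line_inter_unital_not_singleton: "line_of 1 0 (- x0) \<inter> unital \<noteq> {Q}"
proof
  assume single: "line_of 1 0 (- x0) \<inter> unital = {Q}"
  have "pt (0, 1, 0) \<in> line_of 1 0 (- x0) \<inter> unital"
    by (simp add: pt_mem_line_of_iff infinity_mem_unital)
  moreover have "pt (x0, \<alpha> * x0 ^ 2 + \<beta> * x0 * \<phi> x0, 1) \<in> line_of 1 0 (- x0) \<inter> unital"
    by (simp add: pt_mem_line_of_iff affine_mem_unital_iff unital_offset_def hom_zero)
  ultimately have "pt (0, 1, 0) = pt (x0, \<alpha> * x0 ^ 2 + \<beta> * x0 * \<phi> x0, 1)"
    using single by simp
  thus False
    using pt_infinity_neq_affine by metis
qed

lemma skew_form_conj: "\<phi> (skew_form t) = - skew_form t"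
  unfolding skew_form_def by (simp add: hom_simps algebra_simps)

lemma skew_form_scale: "\<phi> c = c \<Longrightarrow> skew_form (c * t) = c ^ 2 * skew_form t"
  unfolding skew_form_def by (simp add: hom_simps algebra_simps power2_eq_square)

lemma skew_form_nonzero:
  assumes "t \<noteq> 0"
  shows "skew_form t \<noteq> 0"
proof
  assume zero: "skew_form t = 0"
  define s where "s = t * \<phi> t"
  define T where "T = \<alpha> * t ^ 2 + \<phi> \<alpha> * \<phi> t ^ 2"
  have "s \<noteq> 0" using assms by (simp add: s_def hom_eq_0_iff)
  have "T ^ 2 - s ^ 2 * ((\<phi> \<beta> - \<beta>) ^ 2 + 4 * \<alpha> * \<phi> \<alpha>)
      = skew_form t * (skew_form t - 2 * (\<beta> - \<phi> \<beta>) * t * \<phi> t)"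
    unfolding s_def T_def skew_form_def by (simp add: algebra_simps power2_eq_square)
  hence "T ^ 2 = s ^ 2 * ((\<phi> \<beta> - \<beta>) ^ 2 + 4 * \<alpha> * \<phi> \<alpha>)"
    using zero by simp
  hence "(T / s) ^ 2 = (\<phi> \<beta> - \<beta>) ^ 2 + 4 * \<alpha> * \<phi> \<alpha>"
    using \<open>s \<noteq> 0\<close> by (simp add: power_divide)
  moreover have "\<phi> (T / s) = T / s"
    by (simp add: s_def T_def hom_simps add.commute mult.commute)
  ultimately show False
    using nonsquare by blast
qed

end

locale pedal_setting = unital_setting +
  fixes \<epsilon> :: "'a::field"
  assumes conj_eps: "\<phi> \<epsilon> = - \<epsilon>" and eps_nonzero: "\<epsilon> \<noteq> 0" and two_nonzero: "(2::'a) \<noteq> 0"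
begin

definition defect :: "'a \<Rightarrow> 'a \<Rightarrow> 'a" where
  "defect m x = \<phi> (unital_offset x (m * x + \<epsilon>)) - unital_offset x (m * x + \<epsilon>)"

lemma line_inter_unital:
  "line_of (- m) 1 (- \<epsilon>) \<inter> unital = {pt (x, m * x + \<epsilon>, 1) | x. defect m x = 0}"
proof (intro equalityI subsetI)
  fix P assume P: "P \<in> line_of (- m) 1 (- \<epsilon>) \<inter> unital"
  have "pt (0, 1, 0) \<notin> line_of (- m) 1 (- \<epsilon>)"
    by (simp add: pt_mem_line_of_iff)
  then obtain x y where "P = pt (x, y, 1)"
    using P by (auto elim: unital_cases)
  moreover from P this have "y = m * x + \<epsilon>"
    by (simp add: pt_mem_line_of_iff algebra_simps)
  ultimately have "P = pt (x, m * x + \<epsilon>, 1)" and "defect m x = 0"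
    using P by (simp_all add: affine_mem_unital_iff defect_def)
  thus "P \<in> {pt (x, m * x + \<epsilon>, 1) | x. defect m x = 0}"
    by blast
next
  fix P assume "P \<in> {pt (x, m * x + \<epsilon>, 1) | x. defect m x = 0}"
  then obtain x where "P = pt (x, m * x + \<epsilon>, 1)" "defect m x = 0"
    by blast
  thus "P \<in> line_of (- m) 1 (- \<epsilon>) \<inter> unital"
    by (simp add: pt_mem_line_of_iff affine_mem_unital_iff defect_def)
qed

lemma defect_add:
  "defect m (x + t)
     = defect m x + skew_form t + (tangent_slope x - m) * t - \<phi> (tangent_slope x - m) * \<phi> t"
  unfolding defect_def unital_offset_def skew_form_def tangent_slope_def
  by (simp add: hom_simps algebra_simps power2_eq_square)

lemma defect_tangent_slope: "defect (tangent_slope x) x = - (skew_form x + 2 * \<epsilon>)"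
  unfolding defect_def unital_offset_def skew_form_def tangent_slope_def
  by (simp add: hom_simps conj_eps algebra_simps power2_eq_square)

lemma defect_root_unique:
  assumes "defect (tangent_slope x0) x0 = 0" and "defect (tangent_slope x0) x = 0"
  shows "x = x0"
proof -
  have "skew_form (x - x0) = 0"
    using defect_add[of "tangent_slope x0" x0 "x - x0"] assms by (simp add: hom_zero)
  thus ?thesis
    using skew_form_nonzero[of "x - x0"] by auto
qed

lemma defect_second_root:
  assumes root: "defect m x0 = 0" and "m \<noteq> tangent_slope x0"
  obtains x where "x \<noteq> x0" and "defect m x = 0"
proof -
  define B where "B = tangent_slope x0 - m"
  define t where "t = \<epsilon> * \<phi> B"
  define l where "l = B * t - \<phi> B * \<phi> t"
  define c where "c = - l / skew_form t"
  have "B \<noteq> 0" using assms(2) by (simp add: B_def)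
  hence "t \<noteq> 0" by (simp add: t_def eps_nonzero hom_eq_0_iff)
  have "l = 2 * \<epsilon> * B * \<phi> B"
    by (simp add: l_def t_def hom_simps conj_eps algebra_simps)
  hence "l \<noteq> 0"
    using \<open>B \<noteq> 0\<close> by (simp add: eps_nonzero two_nonzero hom_eq_0_iff)
  have c_fixed: "\<phi> c = c"
    by (simp add: c_def l_def hom_simps skew_form_conj minus_divide_left)
  have "c \<noteq> 0"
    using \<open>l \<noteq> 0\<close> skew_form_nonzero[OF \<open>t \<noteq> 0\<close>] by (simp add: c_def)
  have "defect m (x0 + c * t) = c * (c * skew_form t + l)"
    using defect_add[of m x0 "c * t"] root
    by (simp add: skew_form_scale[OF c_fixed] B_def [symmetric] l_def hom_mult c_fixed
        algebra_simps power2_eq_square)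
  also have "\<dots> = 0"
    using skew_form_nonzero[OF \<open>t \<noteq> 0\<close>] by (simp add: c_def)
  finally show thesis
    using that[of "x0 + c * t"] \<open>c \<noteq> 0\<close> \<open>t \<noteq> 0\<close> by simp
qed

lemma line_inter_unital_eq_singleton_iff:
  "line_of (- m) 1 (- \<epsilon>) \<inter> unital = {Q}
     \<longleftrightarrow> (\<exists>x. Q = pt (x, m * x + \<epsilon>, 1) \<and> m = tangent_slope x \<and> defect m x = 0)"
proof
  assume single: "line_of (- m) 1 (- \<epsilon>) \<inter> unital = {Q}"
  then obtain x where Q: "Q = pt (x, m * x + \<epsilon>, 1)" "defect m x = 0"
    unfolding line_inter_unital by blast
  have "m = tangent_slope x"
  proof (rule ccontr)
    assume "m \<noteq> tangent_slope x"
    then obtain x' where "x' \<noteq> x" "defect m x' = 0"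
      using defect_second_root[OF Q(2)] by blast
    hence "pt (x', m * x' + \<epsilon>, 1) = Q"
      using single unfolding line_inter_unital by blast
    thus False
      using Q(1) \<open>x' \<noteq> x\<close> by (simp add: pt_affine_eq_iff)
  qed
  thus "\<exists>x. Q = pt (x, m * x + \<epsilon>, 1) \<and> m = tangent_slope x \<and> defect m x = 0"
    using Q by blast
next
  assume "\<exists>x. Q = pt (x, m * x + \<epsilon>, 1) \<and> m = tangent_slope x \<and> defect m x = 0"
  then obtain x0 where "Q = pt (x0, m * x0 + \<epsilon>, 1)" "m = tangent_slope x0" "defect m x0 = 0"
    by blast
  thus "line_of (- m) 1 (- \<epsilon>) \<inter> unital = {Q}"
    unfolding line_inter_unital using defect_root_unique by blast
qed

lemma mem_pedal_iff:
  "Q \<in> pedal unital (pt (0, \<epsilon>, 1)) \<longleftrightarrow> (\<exists>m. line_of (- m) 1 (- \<epsilon>) \<inter> unital = {Q})"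
proof
  assume "Q \<in> pedal unital (pt (0, \<epsilon>, 1))"
  then obtain L where L: "L \<in> lines" "pt (0, \<epsilon>, 1) \<in> L" "L \<inter> unital = {Q}"
    unfolding pedal_def tangent_line_def by blast
  from L(1,2) show "\<exists>m. line_of (- m) 1 (- \<epsilon>) \<inter> unital = {Q}"
  proof (cases rule: lines_through_affine_point)
    case 1
    thus ?thesis using L(3) vertical_line_inter_unital_not_singleton[of 0 Q] by simp
  next
    case (2 m)
    thus ?thesis using L(3) by auto
  qed
next
  assume "\<exists>m. line_of (- m) 1 (- \<epsilon>) \<inter> unital = {Q}"
  then obtain m where "line_of (- m) 1 (- \<epsilon>) \<inter> unital = {Q}"
    by blast
  moreover have "line_of (- m) 1 (- \<epsilon>) \<in> lines"
    by (simp add: line_of_in_lines)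
  moreover have "pt (0, \<epsilon>, 1) \<in> line_of (- m) 1 (- \<epsilon>)"
    by (simp add: pt_mem_line_of_iff)
  ultimately show "Q \<in> pedal unital (pt (0, \<epsilon>, 1))"
    unfolding pedal_def tangent_line_def by auto
qed

lemma pedal_eq:
  "pedal unital (pt (0, \<epsilon>, 1)) = {pt (x, tangent_slope x * x + \<epsilon>, 1) | x. skew_form x + 2 * \<epsilon> = 0}"
  by (auto simp: mem_pedal_iff line_inter_unital_eq_singleton_iff defect_tangent_slope
      neg_eq_iff_add_eq_0)

lemma pedal_on_baer_pencil:
  assumes "Q \<in> pedal unital (pt (0, \<epsilon>, 1))"
  shows "\<exists>L \<in> pencil (pt (1, 0, 0)) ({pt (0, s - \<epsilon>, 1) | s. \<phi> s = s} \<union> {pt (0, 1, 0)}). Q \<in> L"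
proof -
  obtain x where Q: "Q = pt (x, tangent_slope x * x + \<epsilon>, 1)" and on_pedal: "skew_form x + 2 * \<epsilon> = 0"
    using assms unfolding pedal_eq by blast
  define s where "s = \<alpha> * x ^ 2 + \<phi> \<alpha> * \<phi> x ^ 2"
  have "\<phi> s = s"
    by (simp add: s_def hom_simps add.commute)
  have "tangent_slope x * x + \<epsilon> - (s - \<epsilon>) = skew_form x + 2 * \<epsilon>"
    by (simp add: s_def tangent_slope_def skew_form_def algebra_simps power2_eq_square)
  hence y: "tangent_slope x * x + \<epsilon> = s - \<epsilon>"
    using on_pedal by (metis right_minus_eq)
  define L where "L = line_of 0 1 (- (s - \<epsilon>))"
  have "L \<in> join_lines (pt (1, 0, 0)) (pt (0, s - \<epsilon>, 1))"
    by (simp add: join_lines_def L_def line_of_in_lines pt_mem_line_of_iff)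
  moreover have "Q \<in> L"
    by (simp add: Q y L_def pt_mem_line_of_iff)
  ultimately show ?thesis
    unfolding pencil_def using \<open>\<phi> s = s\<close> by blast
qed

end

theorem lemma2p2:
  fixes q :: nat and \<alpha> \<beta> \<zeta> :: "'a::{field,finite}"
  assumes card: "card (UNIV :: 'a set) = q ^ 2"
    and odd_q: "odd q"
    and prim: "primitive_elem \<zeta>"
    and \<alpha>0: "\<alpha> \<noteq> 0"
    and nonsq: "\<not> (\<exists>y::'a. y ^ q = y \<and> y ^ 2 = (\<beta> ^ q - \<beta>) ^ 2 + 4 * \<alpha> ^ (q + 1))"
  defines "\<epsilon> \<equiv> \<zeta> ^ ((q + 1) div 2)"
  shows "pedal (unitalU q \<alpha> \<beta>) (pt (0, \<epsilon>, 1)) =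
           {pt (x, 2 * \<alpha> * x ^ 2 + (\<beta> - \<beta> ^ q) * x ^ (q + 1) + \<epsilon>, 1) | x.
              \<alpha> * x ^ 2 - \<alpha> ^ q * x ^ (2 * q) + (\<beta> - \<beta> ^ q) * x ^ (q + 1) + 2 * \<epsilon> = 0}
       \<and> (\<forall>Q \<in> pedal (unitalU q \<alpha> \<beta>) (pt (0, \<epsilon>, 1)).
            \<exists>L \<in> pencil (pt (1, 0, 0))
                   ({pt (0, s - \<epsilon>, 1) | s. s ^ q = s} \<union> {pt (0, 1, 0)}). Q \<in> L)"
proof -
  interpret pedal_setting "\<lambda>x. x ^ q" \<alpha> \<beta> \<epsilon>
  proof unfold_locales
    show "(x + y) ^ q = x ^ q + y ^ q" for x y :: 'a
      by (rule power_add_if_dvd_card_UNIV) (simp add: card)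
    show "(x ^ q) ^ q = x" for x :: 'a
      using power_card_UNIV_eq_self[of x] by (simp add: card power2_eq_square power_mult)
    show "\<nexists>y. y ^ q = y \<and> y ^ 2 = (\<beta> ^ q - \<beta>) ^ 2 + 4 * \<alpha> * \<alpha> ^ q"
      using nonsq by (simp add: mult.assoc)
    show "\<epsilon> ^ q = - \<epsilon>"
      unfolding \<epsilon>_def using card odd_q prim by (rule power_primitive_elem_conj)
    show "\<epsilon> \<noteq> 0"
      using prim by (simp add: \<epsilon>_def primitive_elem_def)
    show "(2::'a) \<noteq> 0"
      using card odd_q by (intro two_neq_zero_if_odd_card_UNIV) simp
  qed (simp_all add: power_mult_distrib)
  have "unitalU q \<alpha> \<beta> = unital"
    by (simp add: unitalU_def unital_def mult.assoc)
  moreover have "tangent_slope x * x + \<epsilon> = 2 * \<alpha> * x ^ 2 + (\<beta> - \<beta> ^ q) * x ^ (q + 1) + \<epsilon>" for x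
    by (simp add: tangent_slope_def algebra_simps power2_eq_square)
  moreover have "skew_form x = \<alpha> * x ^ 2 - \<alpha> ^ q * x ^ (2 * q) + (\<beta> - \<beta> ^ q) * x ^ (q + 1)" for x
    by (simp add: skew_form_def mult.assoc mult.commute[of 2] power_mult)
  ultimately show ?thesis
    using pedal_eq pedal_on_baer_pencil by simp
qed

end
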